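(* Let $n,q$ be positive integers. For any $\kappa_1,\kappa_2\in\{0,1,\ldots,q-1\}^n$ with $\kappa_1\neq\kappa_2$, there exists a word $w\in\{x,y\}^*$ such that $f(g(\kappa_1)w)=0$ and $f(g(\kappa_2)w)\neq 0$.
   Context: Fix positive integers $n,q$. Define $f:\{x,y\}^*\to\{0,1,\ldots,q-1\}$ as follows: for $w\in\{x,y\}^*$, if $w$ has at most $n$ occurrences of the letter $x$, let $w'=w$; otherwise take the $(n+1)$-st occurrence of $x$ counted from the right end of $w$, erase it and everything to its left, and let $w'$ be the remaining word. Then $f(w)$ is the number of occurrences of $y$ in $w'$, taken modulo $q$. Define $g:\{0,1,\ldots,q-1\}^n\to\{x,y\}^*$ by $g(i_1,i_2,\ldots,i_n)=x y^{i_1} x y^{i_2}\cdots x y^{i_n}$. *)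

theory Defs
  imports Main
begin

datatype letter = X | Y

fun rsuf :: "nat \<Rightarrow> letter list \<Rightarrow> letter list" where
  "rsuf k [] = []"
| "rsuf k (Y # r) = Y # rsuf k r"
| "rsuf 0 (X # r) = []"
| "rsuf (Suc k) (X # r) = X # rsuf k r"

text \<open>w' : w itself if it has at most n X's, otherwise the part strictly to the right
  of the (n+1)-st X counted from the right end.\<close>
definition wprime :: "nat \<Rightarrow> letter list \<Rightarrow> letter list" where
  "wprime n w = rev (rsuf n (rev w))"

definition f :: "nat \<Rightarrow> nat \<Rightarrow> letter list \<Rightarrow> nat" where
  "f n q w = count_list (wprime n w) Y mod q"

definition g :: "nat list \<Rightarrow> letter list" where
  "g is = concat (map (\<lambda>i. X # replicate i Y) is)"

end

theory Submission
  imports Defs "HOL-Number_Theory.Cong"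
begin

text \<open>Let the last position where \<open>k1\<close> and \<open>k2\<close> differ hold \<open>c \<noteq> d\<close>, with \<open>p\<close> entries
  before it and the common tail \<open>s\<close> after it. Appending \<open>X^(p+1) Y^m\<close> to \<open>g k\<close> makes the
  X introducing position \<open>p\<close> the \<open>(n+1)\<close>-st one from the right in both words, so \<open>f\<close> counts
  \<open>c + \<Sigma>s + m\<close> resp. \<open>d + \<Sigma>s + m\<close> modulo \<open>q\<close>. Choosing \<open>m\<close> to make the first sum divisible
  by \<open>q\<close>, the second is not, since \<open>0 < |c - d| < q\<close>.\<close>

lemma rsuf_append: "rsuf (count_list u X + k) (u @ r) = u @ rsuf k r"
proof (induction u arbitrary: k)
  case Nil
  then show ?case by simp
next
  case (Cons a u)
  then show ?case by (cases a) simp_all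
qed

lemma wprime_append_X:
  assumes "count_list v X = n"
  shows "wprime n (u @ X # v) = v"
  using rsuf_append[of "rev v" 0 "X # rev u"] assms by (simp add: wprime_def)

lemma same_length_neq_split_last:
  assumes "length xs = length ys" "xs \<noteq> ys"
  shows "\<exists>as bs c d s. xs = as @ c # s \<and> ys = bs @ d # s \<and> c \<noteq> d \<and> length as = length bs"
  using assms
proof (induction xs arbitrary: ys rule: rev_induct)
  case Nil
  then show ?case by simp
next
  case (snoc x xs)
  obtain ys' y where ys: "ys = ys' @ [y]"
    using snoc.prems by (cases ys rule: rev_exhaust) auto
  show ?case
  proof (cases "x = y")
    case True
    with snoc.prems ys have "length xs = length ys'" "xs \<noteq> ys'" by auto
    with snoc.IH obtain as bs c d s
      where "xs = as @ c # s" "ys' = bs @ d # s" "c \<noteq> d" "length as = length bs"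
      by blast
    with True ys show ?thesis
      by (intro exI[of _ as] exI[of _ bs] exI[of _ c] exI[of _ d] exI[of _ "s @ [x]"]) auto
  next
    case False
    with snoc.prems ys show ?thesis
      by (intro exI[of _ xs] exI[of _ ys'] exI[of _ x] exI[of _ y] exI[of _ "[]"]) auto
  qed
qed

lemma mod_add_distinct_residues:
  fixes c d t q :: nat
  assumes "c < q" "d < q" "c \<noteq> d" "(c + t) mod q = 0"
  shows "(d + t) mod q \<noteq> 0"
proof
  assume "(d + t) mod q = 0"
  with assms(4) have "[c + t = d + t] (mod q)" by (simp add: cong_def)
  then have "[c = d] (mod q)" by (simp add: cong_add_rcancel_nat)
  with assms(1-3) show False by (simp add: cong_def)
qed

lemma count_list_replicate [simp]: "count_list (replicate m a) b = (if a = b then m else 0)"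
  by (induction m) auto

lemma g_append: "g (as @ bs) = g as @ g bs"
  by (simp add: g_def)

lemma count_list_g_X: "count_list (g is) X = length is"
  by (induction "is") (auto simp: g_def)

lemma count_list_g_Y: "count_list (g is) Y = sum_list is"
  by (induction "is") (auto simp: g_def)

lemma f_g_append_padding:
  assumes "length as + Suc (length s) = n"
  shows "f n q (g (as @ c # s) @ replicate (Suc (length as)) X @ replicate m Y)
           = (c + (sum_list s + m)) mod q"
proof -
  define v where "v = replicate c Y @ g s @ replicate (Suc (length as)) X @ replicate m Y"
  have "g (as @ c # s) @ replicate (Suc (length as)) X @ replicate m Y = g as @ X # v"
    by (simp add: v_def g_append g_def)
  moreover have "count_list v X = n"
    using assms by (simp add: v_def count_list_g_X)
  ultimately show ?thesis
    by (simp add: f_def wprime_append_X v_def count_list_g_Y)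
qed

theorem lemma3:
  fixes n q :: nat and k1 k2 :: "nat list"
  assumes "n > 0" and "q > 0"
    and "length k1 = n" and "\<forall>i\<in>set k1. i < q"
    and "length k2 = n" and "\<forall>i\<in>set k2. i < q"
    and "k1 \<noteq> k2"
  shows "\<exists>w :: letter list. f n q (g k1 @ w) = 0 \<and> f n q (g k2 @ w) \<noteq> 0"
proof -
  have "length k1 = length k2"
    using assms(3,5) by simp
  then obtain as bs c d s where k1: "k1 = as @ c # s" and k2: "k2 = bs @ d # s"
    and "c \<noteq> d" and "length as = length bs"
    using same_length_neq_split_last assms(7) by blast
  have "c < q" "d < q"
    using k1 k2 assms(4,6) by auto
  define m where "m = (q - 1) * (c + sum_list s)"
  define w where "w = replicate (Suc (length as)) X @ replicate m Y"
  have f1: "f n q (g k1 @ w) = (c + (sum_list s + m)) mod q"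
    using f_g_append_padding[of as s n q c m] k1 assms(3) by (simp add: w_def)
  have f2: "f n q (g k2 @ w) = (d + (sum_list s + m)) mod q"
    using f_g_append_padding[of bs s n q d m] k2 assms(5) \<open>length as = length bs\<close>
    by (simp add: w_def)
  have "c + (sum_list s + m) = q * (c + sum_list s)"
    using assms(2) by (cases q) (simp_all add: m_def)
  then have "(c + (sum_list s + m)) mod q = 0"
    by simp
  with f1 f2 mod_add_distinct_residues[OF \<open>c < q\<close> \<open>d < q\<close> \<open>c \<noteq> d\<close>] show ?thesis
    by metis
qed

end
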